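(* Let $\mu$ be an absolutely continuous probability measure on $\mathbb{R}^d$ with density $f_\mu$ satisfying (B1), (B2) and (B3) below. Then there is a constant $C>0$ (independent of $\mathbf g,\mathbf g'$ and $i$) such that for all $\mathbf g,\mathbf g'\in\mathbb{R}^M$ and all $i\in\{1,\dots,M\}$, $$\mu\big(\mathbb L_i(\mathbf g)\setminus\mathbb L_i(\mathbf g')\big)\le C\,M\,\|\mathbf g-\mathbf g'\|_\infty .$$
   Context: $\nu=\sum_{i=1}^Mw_i\delta_{y_i}$ with distinct $y_i\in\mathbb{R}^d$, $w_i>0$, $\sum w_i=1$, $w_{\min}=\min w_i$. (PW): a probability measure $\rho$ satisfies it if $\exists C_{pw}$ with $\|f-\mathbb{E}_\rho f\|_{L^1(\rho)}\le C_{pw}\|\nabla f\|_{L^1(\rho)}$ for all $f\in C^1(\mathbb{R}^d)$. (B1): the cost is $c(x,y)=\frac12\|x-y\|^2$ and $\mu$ has finite second moment. (B2): there is a compact $K'$ with $\mu(K')\ge1-\frac14w_{\min}$ such that the probability measure with density $f_\mu\mathbf 1_{K'}/\mu(K')$ satisfies (PW). (B3): with $f_\mu^{R+0}=f_\mu\mathbf 1_{\{\|x\|\le R\}}$, $f_\mu^{R+r}=f_\mu\mathbf 1_{\{R+r-2\le\|x\|\le R+r\}}$ for $r\ge1$, $C_{f_\mu}^{R+r}=\sup f_\mu^{R+r}$, $\omega_{f_\mu}^{R+r}$ the modulus of continuity of $f_\mu^{R+r}$: there exist $R>1$, $C>0$, a modulus $\omega$ with $\sum_{r\ge0}(R+r)^{d-1}\omega_{f_\mu}^{R+r}(\delta)\le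 C\omega(\delta)$ $\forall\delta>0$ and $\sum_{r\ge0}(R+r)^{d-1}C_{f_\mu}^{R+r}<\infty$. $\mathbf g^c(x)=\min_i\{c(x,y_i)-g_i\}$; Laguerre cells $\mathbb L_j(\mathbf g)=\{x:\mathbf g^c(x)=c(x,y_j)-g_j\}$. *)

theory Defs
  imports "HOL-Probability.Probability"
begin

definition quad_cost :: "'a::euclidean_space \<Rightarrow> 'a \<Rightarrow> real" where
  "quad_cost x y = (norm (x - y))^2 / 2"

definition c_transform :: "nat \<Rightarrow> (nat \<Rightarrow> 'a::euclidean_space) \<Rightarrow> (nat \<Rightarrow> real) \<Rightarrow> 'a \<Rightarrow> real" where
  "c_transform M y g x = Min ((\<lambda>i. quad_cost x (y i) - g i) ` {..<M})"

definition laguerre_cell :: "nat \<Rightarrow> (nat \<Rightarrow> 'a::euclidean_space) \<Rightarrow> (nat \<Rightarrow> real) \<Rightarrow> nat \<Rightarrow> 'a set" where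
  "laguerre_cell M y g j = {x. c_transform M y g x = quad_cost x (y j) - g j}"

definition sup_norm :: "nat \<Rightarrow> (nat \<Rightarrow> real) \<Rightarrow> real" where
  "sup_norm M g = Max ((\<lambda>i. \<bar>g i\<bar>) ` {..<M})"

definition satisfies_PW :: "'a::euclidean_space measure \<Rightarrow> bool" where
  "satisfies_PW \<rho> \<longleftrightarrow> (\<exists>Cpw::real. \<forall>(f::'a \<Rightarrow> real) (G::'a \<Rightarrow> 'a).
      (\<forall>x. (f has_derivative (\<lambda>h. G x \<bullet> h)) (at x)) \<and> continuous_on UNIV G \<longrightarrow>
      (\<integral>\<^sup>+ x. ennreal \<bar>f x - (\<integral> z. f z \<partial>\<rho>)\<bar> \<partial>\<rho>)
        \<le> ennreal Cpw * (\<integral>\<^sup>+ x. ennreal (norm (G x)) \<partial>\<rho>))"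

definition mod_cont :: "('a::metric_space \<Rightarrow> real) \<Rightarrow> real \<Rightarrow> ennreal" where
  "mod_cont h \<delta> = (SUP p \<in> {p. dist (fst p) (snd p) \<le> \<delta>}. ennreal \<bar>h (fst p) - h (snd p)\<bar>)"

definition is_modulus :: "(real \<Rightarrow> real) \<Rightarrow> bool" where
  "is_modulus \<omega> \<longleftrightarrow> (\<forall>\<delta>\<ge>0. \<omega> \<delta> \<ge> 0) \<and> mono_on {0..} \<omega> \<and> \<omega> 0 = 0 \<and> (\<omega> \<longlongrightarrow> 0) (at_right 0)"

definition dens_slice :: "('a::euclidean_space \<Rightarrow> real) \<Rightarrow> real \<Rightarrow> nat \<Rightarrow> 'a \<Rightarrow> real" where
  "dens_slice f R r x =
     (if r = 0 then f x * indicator {x. norm x \<le> R} x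
      else f x * indicator {x. R + real r - 2 \<le> norm x \<and> norm x \<le> R + real r} x)"

definition condB3 :: "('a::euclidean_space \<Rightarrow> real) \<Rightarrow> bool" where
  "condB3 f \<longleftrightarrow> (\<exists>R C \<omega>. R > 1 \<and> C > 0 \<and> is_modulus \<omega> \<and>
     (\<forall>\<delta>>0. (\<Sum>r. ennreal ((R + real r) ^ (DIM('a) - 1)) * mod_cont (dens_slice f R r) \<delta>)
              \<le> ennreal (C * \<omega> \<delta>)) \<and>
     (\<Sum>r. ennreal ((R + real r) ^ (DIM('a) - 1)) * (SUP x. ennreal (dens_slice f R r x))) < \<infinity>)"

end

theory Submission
  imports Defs
begin

text \<open>Since \<open>quad_cost x (y i) - quad_cost x (y j)\<close> is affine in \<open>x\<close> with linear part
  \<open>(y j - y i) \<bullet> x\<close>, every point of \<open>\<L>\<^sub>i(g) - \<L>\<^sub>i(g')\<close> lies, for some \<open>j \<noteq> i\<close>, in a slab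
  orthogonal to \<open>y j - y i\<close> of width at most \<open>2 \<parallel>g - g'\<parallel>\<^sub>\<infinity>\<close>. It therefore suffices that the
  \<open>\<mu>\<close>-mass of a slab is at most proportional to its width. For this, bound \<open>f\<close> pointwise by
  \<open>\<Sum>\<^sub>r (sup f\<^sup>R\<^sup>+\<^sup>r) \<one>\<^bsub>B(0, R + r)\<^esub>\<close>; by Fubini along a coordinate axis not orthogonal to the
  slab, a slab of width \<open>h\<close> meets the ball \<open>B(0, R + r)\<close> in Lebesgue measure \<open>O((R + r)\<^sup>d\<^sup>-\<^sup>1 h)\<close>,
  and the summability part of (B3) makes the resulting series converge. Only this part of (B3)
  and the finiteness of \<open>\<mu>\<close> are used.\<close>

definition slab :: "'a::real_inner \<Rightarrow> real \<Rightarrow> real \<Rightarrow> 'a set" where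
  "slab w a b = {x. a \<le> w \<bullet> x \<and> w \<bullet> x \<le> b}"

lemma slab_borel [measurable]:
  fixes w :: "'a::euclidean_space"
  shows "slab w a b \<in> sets borel"
  unfolding slab_def by measurable

lemma emeasure_lborel_affine_preimage_interval_le:
  fixes a b c m :: real
  assumes "m \<noteq> 0" and "a \<le> b"
  shows "emeasure lborel {t. a \<le> c + t * m \<and> c + t * m \<le> b} \<le> ennreal ((b - a) / \<bar>m\<bar>)"
proof (cases "m > 0")
  case True
  then have "{t. a \<le> c + t * m \<and> c + t * m \<le> b} = {(a - c) / m .. (b - c) / m}"
    by (auto simp: field_simps)
  moreover have "(a - c) / m \<le> (b - c) / m" and "(b - c) / m - (a - c) / m = (b - a) / \<bar>m\<bar>"
    using True \<open>a \<le> b\<close> by (simp_all add: divide_right_mono diff_divide_distrib)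
  ultimately show ?thesis by simp
next
  case False
  with \<open>m \<noteq> 0\<close> have "m < 0" by simp
  then have "{t. a \<le> c + t * m \<and> c + t * m \<le> b} = {(b - c) / m .. (a - c) / m}"
    by (auto simp: field_simps)
  moreover have "(b - c) / m \<le> (a - c) / m" and "(a - c) / m - (b - c) / m = (b - a) / \<bar>m\<bar>"
    using \<open>m < 0\<close> \<open>a \<le> b\<close> by (simp_all add: divide_right_mono_neg field_simps)
  ultimately show ?thesis by simp
qed

lemma nn_integral_line_in_slab_cylinder_le:
  fixes w k :: "'a::euclidean_space" and a b \<rho> :: real
  defines "F \<equiv> slab w a b \<inter> {x. \<forall>c\<in>Basis - {k}. \<bar>x \<bullet> c\<bar> \<le> \<rho>}"
  assumes k: "k \<in> Basis" and wk: "w \<bullet> k \<noteq> 0" and ab: "a \<le> b"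
    and x: "x \<in> space (PiM (Basis - {k}) (\<lambda>_. lborel))"
  shows "(\<integral>\<^sup>+t. indicator F (\<Sum>c\<in>Basis. (x(k := t)) c *\<^sub>R c) \<partial>lborel)
           \<le> indicator (PiE (Basis - {k}) (\<lambda>_. {-\<rho>..\<rho>})) x * ennreal ((b - a) / \<bar>w \<bullet> k\<bar>)"
proof -
  define p where "p t = (\<Sum>c\<in>Basis. (x(k := t)) c *\<^sub>R c)" for t
  define box where "box = PiE (Basis - {k}) (\<lambda>_. {-\<rho>..\<rho>})"
  define s where "s = (\<Sum>c\<in>Basis - {k}. x c * (w \<bullet> c))"
  define I where "I = {t. a \<le> s + t * (w \<bullet> k) \<and> s + t * (w \<bullet> k) \<le> b}"
  have "p t = t *\<^sub>R k + (\<Sum>c\<in>Basis - {k}. x c *\<^sub>R c)" for t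
    unfolding p_def using k by (simp add: sum.remove)
  then have w_p: "w \<bullet> p t = s + t * (w \<bullet> k)" for t
    unfolding s_def by (simp add: inner_add_right inner_sum_right mult.commute)
  have in_box: "x \<in> box" if "p t \<in> F" for t
  proof -
    have "x c \<in> {-\<rho>..\<rho>}" if "c \<in> Basis - {k}" for c
    proof -
      have "\<bar>p t \<bullet> c\<bar> \<le> \<rho>"
        using \<open>p t \<in> F\<close> that unfolding F_def by blast
      moreover have "p t \<bullet> c = x c"
        using that unfolding p_def by auto
      ultimately show ?thesis
        by (simp add: abs_le_iff)
    qed
    then show ?thesis
      using x unfolding box_def by (auto simp: space_PiM PiE_iff)
  qed
  have "indicator F (p t) \<le> indicator box x * (indicator I t :: ennreal)" for t
    using in_box[of t] by (auto simp: indicator_def F_def slab_def I_def w_p)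
  then have "(\<integral>\<^sup>+t. indicator F (p t) \<partial>lborel) \<le> (\<integral>\<^sup>+t. indicator box x * indicator I t \<partial>lborel)"
    by (intro nn_integral_mono) auto
  also have "\<dots> = indicator box x * emeasure lborel I"
    unfolding I_def by (intro nn_integral_cmult_indicator) measurable
  also have "\<dots> \<le> indicator box x * ennreal ((b - a) / \<bar>w \<bullet> k\<bar>)"
    unfolding I_def
    by (intro mult_left_mono emeasure_lborel_affine_preimage_interval_le wk ab) simp
  finally show ?thesis
    unfolding p_def box_def .
qed

lemma emeasure_slab_inter_cylinder_le:
  fixes w k :: "'a::euclidean_space"
  assumes k: "k \<in> Basis" and wk: "w \<bullet> k \<noteq> 0" and "\<rho> \<ge> 0" and ab: "a \<le> b"
  shows "emeasure lborel (slab w a b \<inter> {x. \<forall>c\<in>Basis - {k}. \<bar>x \<bullet> c\<bar> \<le> \<rho>})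
           \<le> ennreal ((2 * \<rho>) ^ (DIM('a) - 1) * ((b - a) / \<bar>w \<bullet> k\<bar>))"
proof -
  interpret P: product_sigma_finite "\<lambda>_::'a. lborel :: real measure" ..
  define F where "F = slab w a b \<inter> {x. \<forall>c\<in>Basis - {k}. \<bar>x \<bullet> c\<bar> \<le> \<rho>}"
  define B' where "B' = Basis - {k}"
  define box where "box = PiE B' (\<lambda>_. {-\<rho>..\<rho>})"
  define L where "L = (b - a) / \<bar>w \<bullet> k\<bar>"
  define \<phi> where "\<phi> = (\<lambda>x::'a \<Rightarrow> real. \<Sum>c\<in>Basis. x c *\<^sub>R c)"
  have [measurable]: "F \<in> sets borel"
    unfolding F_def by measurable
  have [measurable]: "\<phi> \<in> borel_measurable (PiM Basis (\<lambda>_. lborel))"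
    unfolding \<phi>_def by measurable
  have Basis_eq: "Basis = insert k B'" and B': "finite B'" "k \<notin> B'"
    using k unfolding B'_def by auto
  have "emeasure lborel F = (\<integral>\<^sup>+x. indicator F x \<partial>lborel)"
    by simp
  also have "\<dots> = (\<integral>\<^sup>+x. indicator F (\<phi> x) \<partial>PiM Basis (\<lambda>_. lborel))"
    unfolding \<phi>_def by (subst lborel_eq) (rule nn_integral_distr; measurable)
  also have "\<dots> = (\<integral>\<^sup>+x. (\<integral>\<^sup>+t. indicator F (\<phi> (x(k := t))) \<partial>lborel) \<partial>PiM B' (\<lambda>_. lborel))"
    unfolding Basis_eq by (rule P.product_nn_integral_insert[OF B']) (simp add: Basis_eq[symmetric])
  also have "\<dots> \<le> (\<integral>\<^sup>+x. indicator box x * ennreal L \<partial>PiM B' (\<lambda>_. lborel))"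
    unfolding F_def \<phi>_def box_def L_def B'_def
    by (intro nn_integral_mono nn_integral_line_in_slab_cylinder_le k wk ab)
  also have "\<dots> = ennreal L * emeasure (PiM B' (\<lambda>_. lborel)) box"
    using B' unfolding box_def
    by (subst nn_integral_multc) (simp_all add: sets_PiM_I_finite mult.commute)
  also have "\<dots> = ennreal L * ennreal ((2 * \<rho>) ^ (DIM('a) - 1))"
    using \<open>\<rho> \<ge> 0\<close> B' k unfolding box_def B'_def
    by (subst P.emeasure_PiM) (auto simp: card_Diff_singleton ennreal_power)
  also have "\<dots> = ennreal ((2 * \<rho>) ^ (DIM('a) - 1) * L)"
    using \<open>\<rho> \<ge> 0\<close> ab by (simp add: ennreal_mult[symmetric] L_def mult.commute)
  finally show ?thesis unfolding F_def L_def .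
qed

lemma emeasure_slab_inter_cball_le:
  fixes w k :: "'a::euclidean_space"
  assumes "k \<in> Basis" and "w \<bullet> k \<noteq> 0" and "\<rho> \<ge> 0" and "a \<le> b"
  shows "emeasure lborel (slab w a b \<inter> cball 0 \<rho>)
           \<le> ennreal ((2 * \<rho>) ^ (DIM('a) - 1) * ((b - a) / \<bar>w \<bullet> k\<bar>))"
proof -
  have "slab w a b \<inter> cball 0 \<rho> \<subseteq> slab w a b \<inter> {x. \<forall>c\<in>Basis - {k}. \<bar>x \<bullet> c\<bar> \<le> \<rho>}"
    by (auto intro: norm_bound_Basis_le)
  then show ?thesis
    by (rule order_trans[OF emeasure_mono emeasure_slab_inter_cylinder_le[OF assms]]) measurable
qed

lemma ennreal_le_suminf_dens_slice_sup:
  fixes f :: "'a::euclidean_space \<Rightarrow> real"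
  shows "ennreal (f x) \<le> (\<Sum>r. (SUP z. ennreal (dens_slice f R r z)) * indicator (cball 0 (R + real r)) x)"
proof -
  obtain r where r: "norm x \<le> R + real r" "dens_slice f R r x = f x"
  proof (cases "norm x \<le> R")
    case True
    then show ?thesis using that[of 0] by (simp add: dens_slice_def)
  next
    case False
    define r where "r = nat \<lceil>norm x - R\<rceil>"
    have "norm x - R \<le> real r" "real r < norm x - R + 1" "r \<noteq> 0"
      using False unfolding r_def by linarith+
    then show ?thesis by (intro that[of r]) (auto simp: dens_slice_def)
  qed
  let ?F = "\<lambda>r. (SUP z. ennreal (dens_slice f R r z)) * indicator (cball 0 (R + real r)) x :: ennreal"
  have "ennreal (f x) \<le> ?F r"
    using r by (auto intro!: SUP_upper2[where i = x])
  also have "\<dots> = (\<Sum>r\<in>{r}. ?F r)"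
    by (simp only: sum.insert_remove sum.empty finite.emptyI) simp
  also have "\<dots> \<le> (\<Sum>r. ?F r)"
    by (rule sum_le_suminf) auto
  finally show ?thesis .
qed

lemma emeasure_density_slab_le:
  fixes f :: "'a::euclidean_space \<Rightarrow> real" and w k :: 'a
  assumes [measurable]: "f \<in> borel_measurable borel"
    and "R \<ge> 0" and k: "k \<in> Basis" and wk: "w \<bullet> k \<noteq> 0" and ab: "a \<le> b"
  shows "emeasure (density lborel f) (slab w a b)
     \<le> ennreal (2 ^ (DIM('a) - 1) * ((b - a) / \<bar>w \<bullet> k\<bar>)) *
        (\<Sum>r. ennreal ((R + real r) ^ (DIM('a) - 1)) * (SUP z. ennreal (dens_slice f R r z)))"
proof -
  define E where "E = slab w a b"
  have [measurable]: "E \<in> sets borel"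
    unfolding E_def by (rule slab_borel)
  define S where "S r = (SUP z. ennreal (dens_slice f R r z))" for r
  define L where "L = 2 ^ (DIM('a) - 1) * ((b - a) / \<bar>w \<bullet> k\<bar>)"
  have [measurable]: "cball 0 \<rho> \<in> sets borel" for \<rho>
    by (simp add: borel_closed)
  have "emeasure (density lborel f) E = (\<integral>\<^sup>+x. ennreal (f x) * indicator E x \<partial>lborel)"
    by (simp add: emeasure_density)
  also have "\<dots> \<le> (\<integral>\<^sup>+x. (\<Sum>r. S r * indicator (E \<inter> cball 0 (R + real r)) x) \<partial>lborel)"
    using ennreal_le_suminf_dens_slice_sup[of f _ R]
    by (intro nn_integral_mono) (auto simp: S_def indicator_def)
  also have "\<dots> = (\<Sum>r. S r * emeasure lborel (E \<inter> cball 0 (R + real r)))"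
    by (subst nn_integral_suminf) (auto intro!: suminf_cong nn_integral_cmult_indicator)
  also have "\<dots> \<le> (\<Sum>r. ennreal L * (ennreal ((R + real r) ^ (DIM('a) - 1)) * S r))"
  proof (intro suminf_le allI)
    fix r
    have "emeasure lborel (E \<inter> cball 0 (R + real r))
            \<le> ennreal ((2 * (R + real r)) ^ (DIM('a) - 1) * ((b - a) / \<bar>w \<bullet> k\<bar>))"
      unfolding E_def using \<open>R \<ge> 0\<close> by (intro emeasure_slab_inter_cball_le k wk ab) simp
    also have "\<dots> = ennreal L * ennreal ((R + real r) ^ (DIM('a) - 1))"
      using \<open>R \<ge> 0\<close> ab unfolding L_def power_mult_distrib
      by (simp add: ennreal_mult[symmetric] mult_ac)
    finally have "S r * emeasure lborel (E \<inter> cball 0 (R + real r))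
                    \<le> S r * (ennreal L * ennreal ((R + real r) ^ (DIM('a) - 1)))"
      by (rule mult_left_mono) simp
    then show "S r * emeasure lborel (E \<inter> cball 0 (R + real r))
                 \<le> ennreal L * (ennreal ((R + real r) ^ (DIM('a) - 1)) * S r)"
      by (simp only: mult_ac)
  qed auto
  also have "\<dots> = ennreal L * (\<Sum>r. ennreal ((R + real r) ^ (DIM('a) - 1)) * S r)"
    by simp
  finally show ?thesis unfolding E_def S_def L_def .
qed

lemma density_slab_measure_le:
  fixes f :: "'a::euclidean_space \<Rightarrow> real" and w :: 'a
  assumes "f \<in> borel_measurable borel" and "condB3 f" and "w \<noteq> 0"
  shows "\<exists>K\<ge>0. \<forall>a b. a \<le> b \<longrightarrow> measure (density lborel f) (slab w a b) \<le> K * (b - a)"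
proof -
  obtain R where "R > 1" and
    fin: "(\<Sum>r. ennreal ((R + real r) ^ (DIM('a) - 1)) * (SUP x. ennreal (dens_slice f R r x))) < \<infinity>"
    using \<open>condB3 f\<close> unfolding condB3_def by blast
  define T where "T = enn2real (\<Sum>r. ennreal ((R + real r) ^ (DIM('a) - 1)) * (SUP x. ennreal (dens_slice f R r x)))"
  have T: "(\<Sum>r. ennreal ((R + real r) ^ (DIM('a) - 1)) * (SUP x. ennreal (dens_slice f R r x))) = ennreal T"
    unfolding T_def using fin by (simp add: ennreal_enn2real_if less_top)
  obtain k where k: "k \<in> Basis" "w \<bullet> k \<noteq> 0"
    using \<open>w \<noteq> 0\<close> euclidean_all_zero_iff by blast
  define K where "K = 2 ^ (DIM('a) - 1) / \<bar>w \<bullet> k\<bar> * T"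
  have "K \<ge> 0" unfolding K_def T_def by simp
  moreover have "measure (density lborel f) (slab w a b) \<le> K * (b - a)" if "a \<le> b" for a b
  proof -
    have "emeasure (density lborel f) (slab w a b)
            \<le> ennreal (2 ^ (DIM('a) - 1) * ((b - a) / \<bar>w \<bullet> k\<bar>)) * ennreal T"
      using emeasure_density_slab_le[OF assms(1) _ k \<open>a \<le> b\<close>, of R] \<open>R > 1\<close> unfolding T by simp
    also have "\<dots> = ennreal (K * (b - a))"
      using \<open>a \<le> b\<close> unfolding K_def T_def by (simp add: ennreal_mult[symmetric] field_simps)
    finally show ?thesis
      unfolding measure_def using \<open>K \<ge> 0\<close> \<open>a \<le> b\<close> by (intro enn2real_leI) auto
  qed
  ultimately show ?thesis by blast
qed

lemma quad_cost_diff_bounded_eq_slab: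
  fixes u v :: "'a::euclidean_space"
  defines "c \<equiv> ((norm u)\<^sup>2 - (norm v)\<^sup>2) / 2"
  shows "{x. a \<le> quad_cost x u - quad_cost x v \<and> quad_cost x u - quad_cost x v \<le> b}
           = slab (v - u) (a - c) (b - c)"
proof -
  have "quad_cost x u - quad_cost x v = (v - u) \<bullet> x + c" for x
    unfolding quad_cost_def c_def power2_norm_eq_inner
    by (simp add: inner_diff_left inner_diff_right inner_commute field_simps)
  then show ?thesis
    unfolding slab_def by auto
qed

lemma measure_quad_cost_diff_bounded_le:
  fixes \<mu> :: "'a::euclidean_space measure"
  assumes "u \<noteq> v" and "a \<le> b"
    and slab_bound: "\<And>w a b. w \<noteq> 0 \<Longrightarrow> a \<le> b \<Longrightarrow> measure \<mu> (slab w a b) \<le> K w * (b - a)"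
  shows "measure \<mu> {x. a \<le> quad_cost x u - quad_cost x v \<and> quad_cost x u - quad_cost x v \<le> b}
           \<le> K (v - u) * (b - a)"
proof -
  define c where "c = ((norm u)\<^sup>2 - (norm v)\<^sup>2) / 2"
  have "measure \<mu> (slab (v - u) (a - c) (b - c)) \<le> K (v - u) * ((b - c) - (a - c))"
    using assms by (intro slab_bound) auto
  then show ?thesis
    unfolding quad_cost_diff_bounded_eq_slab c_def by simp
qed

lemma laguerre_cell_diff_subset:
  assumes "i < M"
  shows "laguerre_cell M y g i - laguerre_cell M y g' i
           \<subseteq> (\<Union>j\<in>{..<M} - {i}. {x. g' i - g' j \<le> quad_cost x (y i) - quad_cost x (y j) \<and>
                                  quad_cost x (y i) - quad_cost x (y j) \<le> g i - g j})"
proof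
  fix x assume x: "x \<in> laguerre_cell M y g i - laguerre_cell M y g' i"
  let ?A = "\<lambda>h. (\<lambda>j. quad_cost x (y j) - h j) ` {..<M}"
  have fin: "finite (?A h)" "?A h \<noteq> {}" for h
    using \<open>i < M\<close> by auto
  have in_g: "Min (?A g) = quad_cost x (y i) - g i"
    and notin_g': "Min (?A g') \<noteq> quad_cost x (y i) - g' i"
    using x unfolding laguerre_cell_def c_transform_def by auto
  obtain j where j: "j < M" "Min (?A g') = quad_cost x (y j) - g' j"
    using Min_in[OF fin] by auto
  have "Min (?A g') \<le> quad_cost x (y i) - g' i"
    using \<open>i < M\<close> by (intro Min_le fin) auto
  with j notin_g' have "quad_cost x (y j) - g' j < quad_cost x (y i) - g' i"
    by simp
  moreover have "quad_cost x (y i) - g i \<le> quad_cost x (y j) - g j"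
    using in_g Min_le[OF fin(1), of "quad_cost x (y j) - g j" g] \<open>j < M\<close> by auto
  ultimately show "x \<in> (\<Union>j\<in>{..<M} - {i}. {x. g' i - g' j \<le> quad_cost x (y i) - quad_cost x (y j) \<and>
                                  quad_cost x (y i) - quad_cost x (y j) \<le> g i - g j})"
    using \<open>j < M\<close> by force
qed

lemma measure_laguerre_cell_diff_le:
  fixes \<mu> :: "'a::euclidean_space measure" and K :: "'a \<Rightarrow> real"
  assumes "finite_measure \<mu>" and sets_\<mu>: "sets \<mu> = sets borel"
    and "inj_on y {..<M}" and "i < M"
    and K_nonneg: "\<And>w. K w \<ge> 0"
    and slab_bound: "\<And>w a b. w \<noteq> 0 \<Longrightarrow> a \<le> b \<Longrightarrow> measure \<mu> (slab w a b) \<le> K w * (b - a)"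
  shows "measure \<mu> (laguerre_cell M y g i - laguerre_cell M y g' i)
           \<le> (\<Sum>j<M. K (y j - y i)) * (2 * sup_norm M (\<lambda>j. g j - g' j))"
proof -
  define \<delta> where "\<delta> = sup_norm M (\<lambda>j. g j - g' j)"
  have \<delta>: "\<bar>g j - g' j\<bar> \<le> \<delta>" if "j < M" for j
    unfolding \<delta>_def sup_norm_def using that by (intro Max_ge) auto
  define S where "S j = {x. g' i - g' j \<le> quad_cost x (y i) - quad_cost x (y j) \<and>
                            quad_cost x (y i) - quad_cost x (y j) \<le> g i - g j}" for j
  have S_sets: "S j \<in> sets \<mu>" for j
    unfolding S_def quad_cost_diff_bounded_eq_slab sets_\<mu> by measurable
  have S_bound: "measure \<mu> (S j) \<le> K (y j - y i) * (2 * \<delta>)" if j: "j \<in> {..<M} - {i}" for j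
  proof (cases "g' i - g' j \<le> g i - g j")
    case True
    from j \<open>inj_on y {..<M}\<close> \<open>i < M\<close> have "y i \<noteq> y j"
      by (auto dest: inj_onD)
    then have "measure \<mu> (S j) \<le> K (y j - y i) * ((g i - g j) - (g' i - g' j))"
      unfolding S_def using True slab_bound by (rule measure_quad_cost_diff_bounded_le)
    also have "\<dots> \<le> K (y j - y i) * (2 * \<delta>)"
      using \<delta>[of i] \<delta>[of j] j \<open>i < M\<close> K_nonneg by (intro mult_left_mono) auto
    finally show ?thesis .
  next
    case False
    then have "S j = {}" unfolding S_def by auto
    then show ?thesis using K_nonneg \<delta>[OF \<open>i < M\<close>] by simp
  qed
  have "laguerre_cell M y g i - laguerre_cell M y g' i \<subseteq> (\<Union>j\<in>{..<M} - {i}. S j)"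
    unfolding S_def using \<open>i < M\<close> by (rule laguerre_cell_diff_subset)
  then have "measure \<mu> (laguerre_cell M y g i - laguerre_cell M y g' i) \<le> measure \<mu> (\<Union>j\<in>{..<M} - {i}. S j)"
    using S_sets by (intro finite_measure.finite_measure_mono[OF \<open>finite_measure \<mu>\<close>]) auto
  also have "\<dots> \<le> (\<Sum>j\<in>{..<M} - {i}. measure \<mu> (S j))"
    using S_sets by (intro measure_UNION_le) auto
  also have "\<dots> \<le> (\<Sum>j\<in>{..<M} - {i}. K (y j - y i) * (2 * \<delta>))"
    using S_bound by (rule sum_mono)
  also have "\<dots> \<le> (\<Sum>j<M. K (y j - y i)) * (2 * \<delta>)"
    using K_nonneg \<delta>[OF \<open>i < M\<close>] by (subst sum_distrib_right) (intro sum_mono2, auto)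
  finally show ?thesis unfolding \<delta>_def .
qed

lemma measure_laguerre_cell_diff_uniform_le:
  fixes \<mu> :: "'a::euclidean_space measure" and K :: "'a \<Rightarrow> real"
  assumes "finite_measure \<mu>" and "sets \<mu> = sets borel" and "inj_on y {..<M}"
    and K_nonneg: "\<And>w. K w \<ge> 0"
    and "\<And>w a b. w \<noteq> 0 \<Longrightarrow> a \<le> b \<Longrightarrow> measure \<mu> (slab w a b) \<le> K w * (b - a)"
  shows "\<exists>C>0. \<forall>g g' :: nat \<Rightarrow> real. \<forall>i<M.
           measure \<mu> (laguerre_cell M y g i - laguerre_cell M y g' i)
             \<le> C * real M * sup_norm M (\<lambda>j. g j - g' j)"
proof -
  define C where "C = 2 * (\<Sum>i<M. \<Sum>j<M. K (y j - y i)) + 1"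
  have "C > 0"
    unfolding C_def using K_nonneg by (simp add: sum_nonneg add_nonneg_pos)
  have "measure \<mu> (laguerre_cell M y g i - laguerre_cell M y g' i)
          \<le> C * real M * sup_norm M (\<lambda>j. g j - g' j)" if "i < M" for g g' :: "nat \<Rightarrow> real" and i
  proof -
    define \<delta> where "\<delta> = sup_norm M (\<lambda>j. g j - g' j)"
    have "0 \<le> \<delta>"
      unfolding \<delta>_def sup_norm_def using \<open>i < M\<close>
      by (intro order_trans[OF abs_ge_zero[of "g i - g' i"] Max_ge]) auto
    have "(\<Sum>j<M. K (y j - y i)) \<le> (\<Sum>i<M. \<Sum>j<M. K (y j - y i))"
      using \<open>i < M\<close> K_nonneg by (intro member_le_sum[of i _ "\<lambda>i. \<Sum>j<M. K (y j - y i)"] sum_nonneg) auto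
    then have "2 * (\<Sum>j<M. K (y j - y i)) \<le> C * 1"
      unfolding C_def by simp
    also have "\<dots> \<le> C * real M"
      using \<open>i < M\<close> \<open>C > 0\<close> by (intro mult_left_mono) auto
    finally have "(\<Sum>j<M. K (y j - y i)) * (2 * \<delta>) \<le> C * real M * \<delta>"
      using \<open>0 \<le> \<delta>\<close> by (simp add: mult_right_mono mult.assoc[symmetric])
    then show ?thesis
      unfolding \<delta>_def
      by (intro order_trans[OF measure_laguerre_cell_diff_le[where K = K]] assms \<open>i < M\<close>) auto
  qed
  with \<open>C > 0\<close> show ?thesis by blast
qed

theorem lemmaB13:
  fixes f :: "'a::euclidean_space \<Rightarrow> real"
    and M :: nat and y :: "nat \<Rightarrow> 'a" and w :: "nat \<Rightarrow> real"
  assumes nu_pts: "inj_on y {..<M}"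
    and nu_w_pos: "\<forall>i<M. w i > 0"
    and nu_w_sum: "(\<Sum>i<M. w i) = 1"
    and f_meas: "f \<in> borel_measurable borel"
    and f_nonneg: "\<forall>x. f x \<ge> 0"
    and f_prob: "(\<integral>\<^sup>+ x. ennreal (f x) \<partial>lborel) = 1"
    and B1: "(\<integral>\<^sup>+ x. ennreal ((norm x)^2) \<partial>density lborel f) < \<infinity>"
    and B2: "\<exists>K'. compact K' \<and>
               measure (density lborel f) K' \<ge> 1 - (Min (w ` {..<M})) / 4 \<and>
               satisfies_PW (density lborel (\<lambda>x. f x * indicator K' x / measure (density lborel f) K'))"
    and B3: "condB3 f"
  shows "\<exists>C>0. \<forall>g g' :: nat \<Rightarrow> real. \<forall>i<M.
           measure (density lborel f) (laguerre_cell M y g i - laguerre_cell M y g' i)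
             \<le> C * real M * sup_norm M (\<lambda>j. g j - g' j)"
proof -
  have "finite_measure (density lborel f)"
    using f_meas f_prob by (intro finite_measureI) (simp add: emeasure_density)
  have "\<forall>w. \<exists>K\<ge>0. w \<noteq> 0 \<longrightarrow> (\<forall>a b. a \<le> b \<longrightarrow>
                   measure (density lborel f) (slab w a b) \<le> K * (b - a))"
    using density_slab_measure_le[OF f_meas B3] by (metis order_refl)
  then obtain K where "\<And>w. K w \<ge> 0" and "\<And>w a b. w \<noteq> 0 \<Longrightarrow> a \<le> b \<Longrightarrow>
      measure (density lborel f) (slab w a b) \<le> K w * (b - a)"
    by metis
  then show ?thesis
    using \<open>finite_measure (density lborel f)\<close> nu_pts
    by (intro measure_laguerre_cell_diff_uniform_le[where K = K]) auto
qed

end
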